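(* Let $Q\in T_{d,n}\cap V_{d,n,\mathrm{gen}}$. Then the tangent space to $V_{d,n}$ at $Q$ is \[ \{Z\in M_n^d : [Q^r,Z^s]=[Q^s,Z^r]\ \ \forall\, 1\le r\ne s\le d\}, \] and the tangent space to $T_{d,n}$ at $Q$ is the set of $Z\in T_{d,n}$ satisfying the same equations. The real dimension of the first tangent space is $2n^2+2(d-1)n$ and of the second is $n^2+(2d-1)n$.
   Context: $M_n$ denotes the $n\times n$ complex matrices and $[A,B]=AB-BA$. $V_{d,n}$ is the set of $d$-tuples of pairwise commuting matrices in $M_n$; $V_{d,n,\mathrm{gen}}$ is the set of $X\in V_{d,n}$ each of whose components $X^r$ has $n$ distinct eigenvalues. $T_{d,n}$ is the set of commuting $d$-tuples of $n\times n$ matrices that are upper triangular with respect to a fixed basis. *)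

theory Defs
  imports "HOL-Analysis.Analysis"
begin

text \<open>n x n complex matrices are complex^'n^'n (row i, column j is A$i$j);
  d-tuples of matrices are (complex^'n^'n)^'d, a finite-dimensional real vector space.\<close>

definition commutator :: "complex^'n^'n \<Rightarrow> complex^'n^'n \<Rightarrow> complex^'n^'n" where
  "commutator A B = A ** B - B ** A"

definition eigenvalues :: "complex^'n^'n \<Rightarrow> complex set" where
  "eigenvalues A = {c. \<exists>v. v \<noteq> 0 \<and> A *v v = c *s v}"

definition upper_triangular :: "complex^('n::{finite,linorder})^('n::{finite,linorder}) \<Rightarrow> bool" where
  "upper_triangular A \<longleftrightarrow> (\<forall>i j. j < i \<longrightarrow> A $ i $ j = 0)"

definition Vdn :: "((complex^'n^'n)^'d) set" where
  "Vdn = {X. \<forall>r s. X $ r ** X $ s = X $ s ** X $ r}"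

definition Vdn_gen :: "((complex^'n^'n)^'d) set" where
  "Vdn_gen = {X. X \<in> Vdn \<and> (\<forall>r. card (eigenvalues (X $ r)) = CARD('n))}"

definition Tdn :: "((complex^('n::{finite,linorder})^('n::{finite,linorder}))^'d) set" where
  "Tdn = {X. X \<in> Vdn \<and> (\<forall>r. upper_triangular (X $ r))}"

definition tangent_space :: "'a::real_normed_vector set \<Rightarrow> 'a \<Rightarrow> 'a set" where
  "tangent_space S x = {v. \<exists>\<gamma>::real \<Rightarrow> 'a. \<gamma> 0 = x \<and> (\<forall>t. \<gamma> t \<in> S) \<and>
                              (\<gamma> has_vector_derivative v) (at 0)}"

end

theory Submission
  imports Defs "HOL-Computational_Algebra.Polynomial"
begin

text \<open>
  Each component of Q is upper triangular, so its eigenvalues are its diagonal entries and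
  genericity makes every diagonal injective. Fix an index r0 and put A = Q^r0. A matrix commuting
  with A is upper triangular and determined by its diagonal, so by Lagrange interpolation it is
  p(A) for a polynomial p; in particular Q^s = p_s(A).

  Differentiating the commutation relations shows that tangent vectors satisfy
  [Q^r, Z^s] = [Q^s, Z^r]. Conversely, let Z be a solution and W = Z^r0. The components of
  t \<mapsto> (p_s(A + tW) + t q_s(A + tW))_s are polynomials in a single matrix, so these curves stay
  in V (and in T if W is triangular); their velocities at 0 are all the solutions, because Z^s
  minus the velocity of p_s(A + tW) commutes with A and hence is some q_s(A).

  Finally Z \<mapsto> (Z^r0, diagonals of the Z^s for s \<noteq> r0) maps the tangent space of V
  (resp. T) isomorphically onto M_n \<times> (C^n)^(d-1) (resp. T_n \<times> (C^n)^(d-1)), of real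
  dimension 2n^2 + 2(d-1)n (resp. n^2 + n + 2(d-1)n).
\<close>

section \<open>Polynomials in a matrix\<close>

lemma matrix_add_rdistrib: "(A + B) ** C = A ** C + B ** C"
  by (vector matrix_matrix_mult_def sum.distrib[symmetric] field_simps)

lemma matrix_diff_ldistrib: "(A :: 'a::ring_1^'n^'m) ** (B - C) = A ** B - A ** C"
  by (vector matrix_matrix_mult_def sum_subtractf[symmetric] field_simps)

lemma matrix_diff_rdistrib: "(A - B :: 'a::ring_1^'n^'m) ** C = A ** C - B ** C"
  by (vector matrix_matrix_mult_def sum_subtractf[symmetric] field_simps)

lemma mat_matrix_mult: "mat c ** A = (\<chi> i j. c * A $ i $ j)"
  unfolding matrix_matrix_mult_def mat_def
  by (auto simp: if_distrib if_distribR sum.delta'[OF finite] cong: if_cong)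

lemma matrix_mult_mat: "A ** mat c = (\<chi> i j. A $ i $ j * c)"
  unfolding matrix_matrix_mult_def mat_def
  by (auto simp: if_distrib if_distribR sum.delta[OF finite] cong: if_cong)

lemma mat_of_real_matrix_mult: "mat (of_real t) ** A = t *\<^sub>R (A :: 'a::real_algebra_1^'n^'m)"
  by (simp add: mat_matrix_mult vec_eq_iff) (simp add: scaleR_conv_of_real)

lemma mat_commute: "mat c ** A = (A :: 'a::comm_semiring_1^'n^'n) ** mat c"
  by (simp add: mat_matrix_mult matrix_mult_mat mult.commute)

lemma mat_add: "mat (a + b) = (mat a + mat b :: 'a::monoid_add^'n^'n)"
  by (simp add: mat_def vec_eq_iff)

lemma mat_mult: "mat (a * b) = mat a ** (mat b :: 'a::semiring_1^'n^'n)"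
  by (simp add: mat_matrix_mult) (simp add: mat_def vec_eq_iff)

definition matrix_poly :: "'a::comm_ring_1 poly \<Rightarrow> 'a^'n^'n \<Rightarrow> 'a^'n^'n" where
  "matrix_poly p A = fold_coeffs (\<lambda>c B. mat c + A ** B) p 0"

lemma matrix_poly_0 [simp]: "matrix_poly 0 A = 0"
  by (simp add: matrix_poly_def)

lemma matrix_poly_pCons [simp]: "matrix_poly (pCons c p) A = mat c + A ** matrix_poly p A"
  by (cases "p = 0 \<and> c = 0") (auto simp: matrix_poly_def)

lemma matrix_poly_add: "matrix_poly (p + q) A = matrix_poly p A + matrix_poly q A"
  by (induction p q rule: poly_induct2) (simp_all add: mat_add matrix_add_ldistrib)

lemma matrix_poly_smult: "matrix_poly (smult c p) A = mat c ** matrix_poly p A"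
  by (induction p) (simp_all add: mat_mult matrix_add_ldistrib matrix_mul_assoc mat_commute[of c A])

lemma matrix_poly_commute_self: "A ** matrix_poly p A = matrix_poly p A ** A"
  by (induction p)
    (simp_all add: matrix_add_ldistrib matrix_add_rdistrib matrix_mul_assoc mat_commute[of _ A])

lemma matrix_poly_commute: "matrix_poly p A ** matrix_poly q A = matrix_poly q A ** matrix_poly p A"
proof (induction p)
  case (pCons c p)
  have "(A ** matrix_poly p A) ** matrix_poly q A = matrix_poly q A ** (A ** matrix_poly p A)"
    by (metis matrix_mul_assoc matrix_poly_commute_self pCons.IH)
  then show ?case
    by (simp add: matrix_add_ldistrib matrix_add_rdistrib mat_commute[of c])
qed simp

section \<open>Upper triangular matrices and their commutant\<close>

lemma upper_triangular_0: "upper_triangular 0"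
  by (simp add: upper_triangular_def)

lemma upper_triangular_add: "upper_triangular A \<Longrightarrow> upper_triangular B \<Longrightarrow> upper_triangular (A + B)"
  by (simp add: upper_triangular_def)

lemma upper_triangular_scaleR: "upper_triangular A \<Longrightarrow> upper_triangular (c *\<^sub>R A)"
  by (simp add: upper_triangular_def)

lemma upper_triangular_mat: "upper_triangular (mat c)"
  by (simp add: upper_triangular_def mat_def)

lemma upper_triangular_mult:
  fixes A B :: "complex^('n::{finite,linorder})^('n::{finite,linorder})"
  assumes "upper_triangular A" "upper_triangular B"
  shows "upper_triangular (A ** B)"
  unfolding upper_triangular_def
proof (intro allI impI)
  fix i j :: 'n assume "j < i"
  then have "A $ i $ k * B $ k $ j = 0" for k
    using assms by (cases "k < i") (auto simp: upper_triangular_def)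
  then show "(A ** B) $ i $ j = 0"
    by (simp add: matrix_matrix_mult_def sum.neutral)
qed

lemma upper_triangular_mult_diagonal:
  fixes A B :: "complex^('n::{finite,linorder})^('n::{finite,linorder})"
  assumes "upper_triangular A" "upper_triangular B"
  shows "(A ** B) $ i $ i = A $ i $ i * B $ i $ i"
proof -
  have "A $ i $ k * B $ k $ i = 0" if "k \<noteq> i" for k
    using assms that by (cases "k < i") (auto simp: upper_triangular_def)
  then show ?thesis
    by (simp add: matrix_matrix_mult_def sum.remove[of UNIV i] sum.neutral)
qed

lemma upper_triangular_matrix_poly: "upper_triangular A \<Longrightarrow> upper_triangular (matrix_poly p A)"
  by (induction p)
    (simp_all add: upper_triangular_0 upper_triangular_add upper_triangular_mat upper_triangular_mult)

lemma matrix_poly_diagonal: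
  "upper_triangular A \<Longrightarrow> matrix_poly p A $ i $ i = poly p (A $ i $ i)"
  by (induction p)
    (simp_all add: upper_triangular_mult_diagonal upper_triangular_matrix_poly mat_def)

lemma eigenvalues_upper_triangular:
  fixes A :: "complex^('n::{finite,linorder})^('n::{finite,linorder})"
  assumes "upper_triangular A"
  shows "eigenvalues A \<subseteq> range (\<lambda>i. A $ i $ i)"
proof
  fix c assume "c \<in> eigenvalues A"
  then obtain v where v: "v \<noteq> 0" "A *v v = c *s v"
    by (auto simp: eigenvalues_def)
  define k where "k = Max {i. v $ i \<noteq> 0}"
  have "{i. v $ i \<noteq> 0} \<noteq> {}"
    using v(1) by (auto simp: vec_eq_iff)
  then have vk: "v $ k \<noteq> 0"
    unfolding k_def using Max_in[of "{i. v $ i \<noteq> 0}"] by simp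
  have above_k: "v $ j = 0" if "k < j" for j
    using that Max_ge[of "{i. v $ i \<noteq> 0}" j] unfolding k_def by fastforce
  have "A $ k $ j * v $ j = 0" if "j \<noteq> k" for j
    using assms above_k that by (cases "j < k") (auto simp: upper_triangular_def)
  then have "(A *v v) $ k = A $ k $ k * v $ k"
    by (simp add: matrix_vector_mult_def sum.remove[of UNIV k] sum.neutral)
  with v(2) vk have "c = A $ k $ k"
    by simp
  then show "c \<in> range (\<lambda>i. A $ i $ i)"
    by blast
qed

lemma inj_diagonal_if_card_eigenvalues:
  fixes A :: "complex^('n::{finite,linorder})^('n::{finite,linorder})"
  assumes "upper_triangular A" and "card (eigenvalues A) = CARD('n)"
  shows "inj (\<lambda>i. A $ i $ i)"
proof -
  have "CARD('n) \<le> card (range (\<lambda>i. A $ i $ i))"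
    using assms card_mono[OF _ eigenvalues_upper_triangular] by fastforce
  then show ?thesis
    by (simp add: card_image_le eq_card_imp_inj_on le_antisym)
qed

lemma lagrange_interpolation:
  fixes x :: "'i::finite \<Rightarrow> 'a::field"
  assumes "inj x"
  shows "\<exists>p. \<forall>i. poly p (x i) = y i"
proof -
  define L where "L i = (\<Prod>j\<in>UNIV - {i}. [:- x j, 1:])" for i
  define p where "p = (\<Sum>i\<in>UNIV. smult (y i / poly (L i) (x i)) (L i))"
  have L: "poly (L i) (x k) = 0 \<longleftrightarrow> k \<noteq> i" for i k
    using assms by (auto simp: L_def poly_prod inj_eq)
  have "poly p (x k) = y k" for k
    using L by (simp add: p_def poly_sum sum.remove[of UNIV k] sum.neutral)
  then show ?thesis
    by blast
qed

lemma commuting_entry_eq_0: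
  fixes A B :: "complex^('n::{finite,linorder})^('n::{finite,linorder})"
  assumes "upper_triangular A" and "A ** B = B ** A" and "A $ i $ i \<noteq> A $ j $ j"
    and below: "\<And>k. i < k \<Longrightarrow> B $ k $ j = 0" and left: "\<And>k. k < j \<Longrightarrow> B $ i $ k = 0"
  shows "B $ i $ j = 0"
proof -
  have "A $ i $ k * B $ k $ j = 0" if "k \<noteq> i" for k
    using assms(1) below that by (cases "k < i") (auto simp: upper_triangular_def)
  then have "(A ** B) $ i $ j = A $ i $ i * B $ i $ j"
    by (simp add: matrix_matrix_mult_def sum.remove[of UNIV i] sum.neutral)
  moreover have "B $ i $ k * A $ k $ j = 0" if "k \<noteq> j" for k
    using assms(1) left that by (cases "k < j") (auto simp: upper_triangular_def)
  then have "(B ** A) $ i $ j = B $ i $ j * A $ j $ j"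
    by (simp add: matrix_matrix_mult_def sum.remove[of UNIV j] sum.neutral)
  ultimately show ?thesis
    using assms(2,3) by (metis mult.commute mult_cancel_left)
qed

lemma commuting_upper_triangular:
  fixes A B :: "complex^('n::{finite,linorder})^('n::{finite,linorder})"
  assumes "upper_triangular A" and "inj (\<lambda>i. A $ i $ i)" and "A ** B = B ** A"
  shows "upper_triangular B"
proof -
  have "B $ i $ j = 0" if "j < i" for i j
    using that \<comment> \<open>the entries needed at (i, j) lie farther from the diagonal\<close>
  proof (induction "CARD('n) - card {j..i}" arbitrary: i j rule: less_induct)
    case less
    have card_less: "CARD('n) - card J < CARD('n) - card {j..i}" if "{j..i} \<subset> J" for J
      using psubset_card_mono[OF finite that] card_mono[OF finite subset_UNIV, of J] by linarith
    show ?case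
    proof (rule commuting_entry_eq_0[OF assms(1,3)])
      show "A $ i $ i \<noteq> A $ j $ j"
        using assms(2) less.prems by (auto dest: injD)
      show "B $ k $ j = 0" if "i < k" for k
        using that less by (intro less.hyps card_less) auto
      show "B $ i $ k = 0" if "k < j" for k
        using that less by (intro less.hyps card_less) auto
    qed
  qed
  then show ?thesis
    by (simp add: upper_triangular_def)
qed

lemma commuting_diagonal_eq_0:
  fixes A B :: "complex^('n::{finite,linorder})^('n::{finite,linorder})"
  assumes "upper_triangular A" and "inj (\<lambda>i. A $ i $ i)" and "A ** B = B ** A"
    and diag: "\<And>i. B $ i $ i = 0"
  shows "B = 0"
proof -
  have B: "upper_triangular B"
    using commuting_upper_triangular assms(1-3) .
  have "B $ i $ j = 0" if "i < j" for i j
    using that \<comment> \<open>above the diagonal they lie closer to it\<close>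
  proof (induction "card {i..j}" arbitrary: i j rule: less_induct)
    case less
    have IH: "B $ i' $ j' = 0" if "{i'..j'} \<subset> {i..j}" "i' < j'" for i' j'
      using less.hyps psubset_card_mono[OF finite that(1)] that(2) by blast
    show ?case
    proof (rule commuting_entry_eq_0[OF assms(1,3)])
      show "A $ i $ i \<noteq> A $ j $ j"
        using assms(2) less.prems by (auto dest: injD)
      show "B $ k $ j = 0" if "i < k" for k
        using that B diag by (cases k j rule: linorder_cases)
          (auto simp: upper_triangular_def intro!: IH)
      show "B $ i $ k = 0" if "k < j" for k
        using that B diag by (cases i k rule: linorder_cases)
          (auto simp: upper_triangular_def intro!: IH)
    qed
  qed
  then show ?thesis
    using B diag by (metis linorder_cases upper_triangular_def vec_eq_iff zero_index)
qed

lemma commuting_eq_matrix_poly: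
  fixes A B :: "complex^('n::{finite,linorder})^('n::{finite,linorder})"
  assumes "upper_triangular A" and "inj (\<lambda>i. A $ i $ i)" and "A ** B = B ** A"
  shows "\<exists>p. B = matrix_poly p A"
proof -
  obtain p where p: "\<And>i. poly p (A $ i $ i) = B $ i $ i"
    using lagrange_interpolation[OF assms(2), of "\<lambda>i. B $ i $ i"] by blast
  have "A ** (B - matrix_poly p A) = (B - matrix_poly p A) ** A"
    by (simp add: matrix_diff_ldistrib matrix_diff_rdistrib assms(3) matrix_poly_commute_self)
  then have "B - matrix_poly p A = 0"
    by (rule commuting_diagonal_eq_0[OF assms(1,2)]) (simp add: matrix_poly_diagonal assms(1) p)
  then show ?thesis
    by auto
qed

section \<open>Curves of matrices and tangent spaces\<close>

lemma bounded_bilinear_matrix_mult: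
  "bounded_bilinear ((**) :: 'a::{euclidean_space, real_algebra_1}^'n^'m \<Rightarrow> 'a^'p^'n \<Rightarrow> 'a^'p^'m)"
  unfolding bilinear_conv_bounded_bilinear[symmetric] bilinear_def
  by (auto intro!: linearI simp: matrix_add_ldistrib matrix_add_rdistrib
      scalar_matrix_assoc[symmetric] matrix_scalar_ac)

lemma has_vector_derivative_matrix_mult:
  fixes f :: "real \<Rightarrow> 'a::{euclidean_space, real_algebra_1}^'n^'m" and g :: "real \<Rightarrow> 'a^'p^'n"
  assumes "(f has_vector_derivative f') (at x)" and "(g has_vector_derivative g') (at x)"
  shows "((\<lambda>t. f t ** g t) has_vector_derivative f x ** g' + f' ** g x) (at x)"
  using bounded_bilinear.has_vector_derivative[OF bounded_bilinear_matrix_mult assms] .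

lemma differentiable_matrix_mult:
  fixes f :: "real \<Rightarrow> 'a::{euclidean_space, real_algebra_1}^'n^'m" and g :: "real \<Rightarrow> 'a^'p^'n"
  assumes "f differentiable (at x)" and "g differentiable (at x)"
  shows "(\<lambda>t. f t ** g t) differentiable (at x)"
proof -
  have "((\<lambda>t. f t ** g t) has_vector_derivative
      f x ** vector_derivative g (at x) + vector_derivative f (at x) ** g x) (at x)"
    using assms by (intro has_vector_derivative_matrix_mult) (simp_all add: vector_derivative_works)
  then show ?thesis
    by (rule differentiableI_vector)
qed

lemma differentiable_matrix_poly:
  fixes f :: "real \<Rightarrow> 'a::{euclidean_space, real_algebra_1, comm_ring_1}^'n^'n"
  assumes "f differentiable (at x)"
  shows "(\<lambda>t. matrix_poly p (f t)) differentiable (at x)"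
proof (induction p)
  case (pCons c p)
  then show ?case
    by (simp add: differentiable_matrix_mult assms)
qed simp

lemma has_vector_derivative_vec_lambda:
  fixes f :: "'i::finite \<Rightarrow> real \<Rightarrow> 'a::euclidean_space"
  assumes "\<And>i. (f i has_vector_derivative f' i) (at x)"
  shows "((\<lambda>t. \<chi> i. f i t) has_vector_derivative (\<chi> i. f' i)) (at x)"
proof -
  have axis: "bounded_linear (axis i :: 'a \<Rightarrow> 'a^'i)" for i
    unfolding linear_conv_bounded_linear[symmetric]
    by (rule linearI) (simp_all add: axis_def vec_eq_iff)
  have sum_axis: "(\<chi> i. h i) = (\<Sum>i\<in>UNIV. axis i (h i))" for h :: "'i \<Rightarrow> 'a"
    by (simp add: vec_eq_iff axis_def)
  show ?thesis
    unfolding sum_axis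
    by (intro has_vector_derivative_sum bounded_linear.has_vector_derivative[OF axis] assms)
qed

lemma tangent_space_mono: "S \<subseteq> T \<Longrightarrow> tangent_space S x \<subseteq> tangent_space T x"
  unfolding tangent_space_def by blast

lemma tangent_space_linear_eq_0:
  assumes "v \<in> tangent_space S x" and "bounded_linear l" and "\<And>y. y \<in> S \<Longrightarrow> l y = 0"
  shows "l v = 0"
proof -
  obtain \<gamma> where \<gamma>: "\<And>t. \<gamma> t \<in> S" "(\<gamma> has_vector_derivative v) (at 0)"
    using assms(1) by (auto simp: tangent_space_def)
  have "((\<lambda>t. l (\<gamma> t)) has_vector_derivative l v) (at 0)"
    using bounded_linear.has_vector_derivative[OF assms(2) \<gamma>(2)] .
  moreover have "(\<lambda>t. l (\<gamma> t)) = (\<lambda>t. 0)"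
    using \<gamma>(1) assms(3) by auto
  ultimately show ?thesis
    using vector_derivative_unique_at has_vector_derivative_const by metis
qed

lemma tangent_space_Tdn_upper_triangular:
  fixes Q :: "(complex^('n::{finite,linorder})^('n::{finite,linorder}))^'d"
  assumes "Z \<in> tangent_space Tdn Q"
  shows "upper_triangular (Z $ r)"
  unfolding upper_triangular_def
proof (intro allI impI)
  fix i j :: 'n assume "j < i"
  then show "Z $ r $ i $ j = 0"
    using assms by (rule_tac tangent_space_linear_eq_0[where l = "\<lambda>X. X $ r $ i $ j"])
      (auto simp: Tdn_def upper_triangular_def bounded_linear_compose[OF bounded_linear_vec_nth])
qed

lemma tangent_space_Vdn_commutator:
  fixes Q :: "(complex^'n^'n)^'d"
  assumes "Z \<in> tangent_space Vdn Q"
  shows "commutator (Q $ r) (Z $ s) = commutator (Q $ s) (Z $ r)"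
proof -
  obtain \<gamma> where \<gamma>: "\<gamma> 0 = Q" "\<And>t. \<gamma> t \<in> Vdn" "(\<gamma> has_vector_derivative Z) (at 0)"
    using assms by (auto simp: tangent_space_def)
  have d: "((\<lambda>t. \<gamma> t $ r) has_vector_derivative Z $ r) (at 0)" for r
    using bounded_linear.has_vector_derivative[OF bounded_linear_vec_nth \<gamma>(3)] .
  have "((\<lambda>t. \<gamma> t $ r ** \<gamma> t $ s) has_vector_derivative Q $ r ** Z $ s + Z $ r ** Q $ s) (at 0)"
    using has_vector_derivative_matrix_mult[OF d d] \<gamma>(1) by simp
  moreover have "(\<lambda>t. \<gamma> t $ r ** \<gamma> t $ s) = (\<lambda>t. \<gamma> t $ s ** \<gamma> t $ r)"
    using \<gamma>(2) by (simp add: Vdn_def)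
  then have "((\<lambda>t. \<gamma> t $ r ** \<gamma> t $ s) has_vector_derivative Q $ s ** Z $ r + Z $ s ** Q $ r) (at 0)"
    using has_vector_derivative_matrix_mult[OF d d] \<gamma>(1) by simp
  ultimately have "Q $ r ** Z $ s + Z $ r ** Q $ s = Q $ s ** Z $ r + Z $ s ** Q $ r"
    by (rule vector_derivative_unique_at)
  then show ?thesis
    by (simp add: commutator_def algebra_simps)
qed

lemma commutator_add_right: "commutator X (Y + Y') = commutator X Y + commutator X Y'"
  by (simp add: commutator_def matrix_add_ldistrib matrix_add_rdistrib)

lemma commutator_diff_right: "commutator X (Y - Y') = commutator X Y - commutator X Y'"
  by (simp add: commutator_def matrix_diff_ldistrib matrix_diff_rdistrib)

lemma commutator_scaleR_right: "commutator X (c *\<^sub>R Y) = c *\<^sub>R commutator X Y"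
  by (simp add: commutator_def matrix_scalar_ac scalar_matrix_assoc[symmetric] scaleR_diff_right)

lemma commutator_0_right: "commutator X 0 = 0"
  by (simp add: commutator_def)

definition linearized_commuting :: "(complex^'n^'n)^'d \<Rightarrow> ((complex^'n^'n)^'d) set" where
  "linearized_commuting Q =
    {Z. \<forall>r s. r \<noteq> s \<longrightarrow> commutator (Q $ r) (Z $ s) = commutator (Q $ s) (Z $ r)}"

lemma subspace_linearized_commuting: "subspace (linearized_commuting Q)"
  unfolding subspace_def linearized_commuting_def
  by (auto simp: commutator_add_right commutator_scaleR_right commutator_0_right)

lemma subspace_linearized_commuting_upper_triangular:
  "subspace {Z \<in> linearized_commuting Q. \<forall>r. upper_triangular (Z $ r)}"
  using subspace_linearized_commuting[of Q]
  by (simp add: subspace_def upper_triangular_0 upper_triangular_add upper_triangular_scaleR)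

section \<open>Dimension counts\<close>

lemma dim_image_eq_if_kernel_trivial:
  fixes f :: "'a::euclidean_space \<Rightarrow> 'b::euclidean_space"
  assumes "linear f" and "subspace S" and "\<And>x. x \<in> S \<Longrightarrow> f x = 0 \<Longrightarrow> x = 0"
  shows "dim (f ` S) = dim S"
proof -
  have "inj_on f S"
    using assms by (simp add: linear_inj_on_iff_eq_0)
  then have "inj_on f (span S)"
    using assms(2) by (simp add: span_eq_iff[THEN iffD2])
  then show ?thesis
    by (rule dim_image_eq[OF assms(1)])
qed

lemma dim_matrices_vanishing_outside:
  fixes P :: "('n::finite \<times> 'm::finite) set"
  shows "dim {M :: 'a::euclidean_space^'m^'n. \<forall>i j. (i, j) \<notin> P \<longrightarrow> M $ i $ j = 0}
    = card P * DIM('a)"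
proof -
  define e :: "('n \<times> 'm) \<times> 'a \<Rightarrow> 'a^'m^'n" where "e = (\<lambda>((i, j), u). axis i (axis j u))"
  have inj_e: "inj_on e (UNIV \<times> Basis)"
    by (auto simp: inj_on_def e_def axis_eq_axis nonzero_Basis)
  have Basis_eq: "Basis = e ` (UNIV \<times> Basis)"
    by (force simp: e_def Basis_vec_def image_iff)
  have "{M :: 'a^'m^'n. \<forall>i j. (i, j) \<notin> P \<longrightarrow> M $ i $ j = 0}
      = {M. \<forall>b\<in>Basis. b \<notin> e ` (P \<times> Basis) \<longrightarrow> M \<bullet> b = 0}"
  proof -
    have "e ((i, j), u) \<notin> e ` (P \<times> Basis) \<longleftrightarrow> (i, j) \<notin> P" if "u \<in> Basis" for i j u
      using that inj_onD[OF inj_e] by fastforce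
    then have "(\<forall>b\<in>Basis. b \<notin> e ` (P \<times> Basis) \<longrightarrow> M \<bullet> b = 0)
        \<longleftrightarrow> (\<forall>i j. (i, j) \<notin> P \<longrightarrow> (\<forall>u\<in>Basis. M $ i $ j \<bullet> u = 0))" for M :: "'a^'m^'n"
      unfolding Basis_eq by (auto simp: e_def inner_axis)
    then show ?thesis
      by (simp add: euclidean_all_zero_iff)
  qed
  also have "dim \<dots> = card (e ` (P \<times> Basis))"
    by (rule dim_substandard) (auto simp: Basis_eq)
  also have "\<dots> = card (P \<times> (Basis :: 'a set))"
    by (rule card_image, rule inj_on_subset[OF inj_e]) auto
  also have "\<dots> = card P * DIM('a)"
    by (simp add: card_cartesian_product)
  finally show ?thesis .
qed

lemma card_upper_triangle: "2 * card {(i, j). (i :: 'n::{finite,linorder}) \<le> j} = CARD('n)^2 + CARD('n)"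
proof -
  define U where "U = {(i, j). (i :: 'n) \<le> j}"
  have "U \<union> prod.swap ` U = UNIV"
    by (auto simp: U_def image_iff)
  moreover have "U \<inter> prod.swap ` U = range (\<lambda>i. (i, i))"
    by (auto simp: U_def)
  moreover have "card U + card (prod.swap ` U) = card (U \<union> prod.swap ` U) + card (U \<inter> prod.swap ` U)"
    by (rule card_Un_Int) simp_all
  moreover have "card (prod.swap ` U) = card U"
    by (rule card_image[OF inj_swap])
  ultimately have "2 * card U = CARD('n \<times> 'n) + CARD('n)"
    by (simp add: card_image inj_on_def)
  then show ?thesis
    using card_cartesian_product[of "UNIV :: 'n set" "UNIV :: 'n set"]
    by (simp add: U_def power2_eq_square)
qed

lemma subspace_upper_triangular: "subspace {M. upper_triangular M}"
  by (simp add: subspace_def upper_triangular_0 upper_triangular_add upper_triangular_scaleR)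

lemma dim_upper_triangular:
  "dim {M :: complex^('n::{finite,linorder})^('n::{finite,linorder}). upper_triangular M}
    = CARD('n)^2 + CARD('n)" (is "dim ?U = _")
proof -
  have "?U = {M. \<forall>i j. (i, j) \<notin> {(i, j). i \<le> j} \<longrightarrow> M $ i $ j = 0}"
    by (auto simp: upper_triangular_def not_le)
  then have "dim ?U = card {(i, j). (i :: 'n) \<le> j} * DIM(complex)"
    by (simp only: dim_matrices_vanishing_outside)
  then show ?thesis
    using card_upper_triangle[where 'n = 'n] by simp
qed

lemma subspace_vec_nth_eq_0: "subspace {x. x $ i = 0}"
  by (simp add: subspace_def)

lemma dim_vec_nth_eq_0:
  "dim {c :: 'a::euclidean_space^'m^'n. c $ r = 0} = (CARD('n) - 1) * CARD('m) * DIM('a)"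
proof -
  have "{c :: 'a^'m^'n. c $ r = 0} = {c. \<forall>i j. (i, j) \<notin> (UNIV - {r}) \<times> UNIV \<longrightarrow> c $ i $ j = 0}"
    by (auto simp: vec_eq_iff)
  then have "dim {c :: 'a^'m^'n. c $ r = 0} = card ((UNIV - {r}) \<times> (UNIV :: 'm set)) * DIM('a)"
    by (simp only: dim_matrices_vanishing_outside)
  then show ?thesis
    by (simp add: card_cartesian_product)
qed

section \<open>Tangent spaces at a generic triangular tuple\<close>

definition diagonal :: "'a^'n^'n \<Rightarrow> 'a^'n" where
  "diagonal M = (\<chi> i. M $ i $ i)"

locale generic_triangular_tuple =
  fixes Q :: "(complex^('n::{finite,linorder})^('n::{finite,linorder}))^('d::finite)"
    and r0 :: 'd
  assumes triangular: "Q \<in> Tdn" and generic: "Q \<in> Vdn_gen"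
begin

abbreviation A where
  "A \<equiv> Q $ r0"

lemma upper_triangular_Q: "upper_triangular (Q $ r)"
  using triangular by (simp add: Tdn_def)

lemma inj_diagonal_A: "inj (\<lambda>i. A $ i $ i)"
  using generic upper_triangular_Q by (intro inj_diagonal_if_card_eigenvalues) (auto simp: Vdn_gen_def)

lemma commuting_A_eq_matrix_poly: "A ** B = B ** A \<Longrightarrow> \<exists>p. B = matrix_poly p A"
  using commuting_eq_matrix_poly upper_triangular_Q inj_diagonal_A by blast

text \<open>Taking X for the index r0 makes the r0-th component of every curve below the line A + tW.\<close>

definition component_poly :: "'d \<Rightarrow> complex poly" where
  "component_poly s = (if s = r0 then [:0, 1:] else SOME p. Q $ s = matrix_poly p A)"

lemma matrix_poly_component_poly: "matrix_poly (component_poly s) A = Q $ s"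
proof (cases "s = r0")
  case False
  have "\<exists>p. Q $ s = matrix_poly p A"
    using triangular by (intro commuting_A_eq_matrix_poly) (simp add: Tdn_def Vdn_def)
  from someI_ex[OF this] False show ?thesis
    by (simp add: component_poly_def)
qed (simp add: component_poly_def)

definition curve where
  "curve W q t = (\<chi> s. matrix_poly (component_poly s + smult (of_real t) (q s)) (A + t *\<^sub>R W))"

lemma curve_0: "curve W q 0 = Q"
  by (simp add: curve_def matrix_poly_component_poly vec_eq_iff)

lemma curve_in_Vdn: "curve W q t \<in> Vdn"
  by (simp add: curve_def Vdn_def matrix_poly_commute)

lemma curve_in_Tdn: "upper_triangular W \<Longrightarrow> curve W q t \<in> Tdn"
  using curve_in_Vdn upper_triangular_Q
  by (simp add: Tdn_def curve_def upper_triangular_matrix_poly upper_triangular_add upper_triangular_scaleR)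

definition lift where
  "lift W s = vector_derivative (\<lambda>t. matrix_poly (component_poly s) (A + t *\<^sub>R W)) (at 0)"

lemma has_vector_derivative_curve:
  "(curve W q has_vector_derivative (\<chi> s. lift W s + matrix_poly (q s) A)) (at 0)"
proof -
  have line: "(\<lambda>t. A + t *\<^sub>R W) differentiable (at 0)"
    by (simp add: differentiable_add)
  have "((\<lambda>t. matrix_poly (component_poly s) (A + t *\<^sub>R W) + t *\<^sub>R matrix_poly (q s) (A + t *\<^sub>R W))
      has_vector_derivative lift W s + matrix_poly (q s) A) (at 0)" for s
  proof (rule has_vector_derivative_add)
    show "((\<lambda>t. matrix_poly (component_poly s) (A + t *\<^sub>R W)) has_vector_derivative lift W s) (at 0)"
      unfolding lift_def using differentiable_matrix_poly[OF line] vector_derivative_works by blast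
    obtain D where "((\<lambda>t. matrix_poly (q s) (A + t *\<^sub>R W)) has_vector_derivative D) (at 0)"
      using differentiable_matrix_poly[OF line] vector_derivative_works by blast
    from has_vector_derivative_scaleR[OF DERIV_ident this]
    show "((\<lambda>t. t *\<^sub>R matrix_poly (q s) (A + t *\<^sub>R W)) has_vector_derivative
        matrix_poly (q s) A) (at 0)"
      by simp
  qed
  then show ?thesis
    unfolding curve_def
    by (simp add: matrix_poly_add matrix_poly_smult mat_of_real_matrix_mult
        has_vector_derivative_vec_lambda)
qed

lemma lift_r0: "lift W r0 = W"
proof -
  have "((\<lambda>t. A + t *\<^sub>R W) has_vector_derivative W) (at 0)"
    by (auto intro!: derivative_eq_intros)
  then show ?thesis
    by (simp add: lift_def component_poly_def vector_derivative_at)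
qed

lemma tangent_curve_Vdn: "(\<chi> s. lift W s + matrix_poly (q s) A) \<in> tangent_space Vdn Q"
  unfolding tangent_space_def using curve_0 curve_in_Vdn has_vector_derivative_curve by blast

lemma tangent_curve_Tdn:
  "upper_triangular W \<Longrightarrow> (\<chi> s. lift W s + matrix_poly (q s) A) \<in> tangent_space Tdn Q"
  unfolding tangent_space_def using curve_0 curve_in_Tdn has_vector_derivative_curve by blast

lemma commutator_lift: "commutator A (lift W s) = commutator (Q $ s) W"
  using tangent_space_Vdn_commutator[OF tangent_curve_Vdn[of W "\<lambda>_. 0"], of r0 s]
  by (simp add: lift_r0)

lemma linearized_commuting_eq_lift:
  assumes "Z \<in> linearized_commuting Q"
  shows "\<exists>q. Z = (\<chi> s. lift (Z $ r0) s + matrix_poly (q s) A)"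
proof -
  have "\<exists>p. Z $ s - lift (Z $ r0) s = matrix_poly p A" for s
  proof (cases "s = r0")
    case False
    then have "commutator A (Z $ s) = commutator (Q $ s) (Z $ r0)"
      using assms by (simp add: linearized_commuting_def)
    then have "commutator A (Z $ s - lift (Z $ r0) s) = 0"
      by (simp add: commutator_diff_right commutator_lift)
    then show ?thesis
      by (intro commuting_A_eq_matrix_poly) (simp add: commutator_def)
  qed (auto simp: lift_r0 intro: exI[of _ 0])
  then obtain q where "\<And>s. Z $ s - lift (Z $ r0) s = matrix_poly (q s) A"
    by metis
  then have "Z = (\<chi> s. lift (Z $ r0) s + matrix_poly (q s) A)"
    by (simp add: vec_eq_iff diff_eq_eq)
  then show ?thesis
    by blast
qed

lemma tangent_space_Vdn_eq: "tangent_space Vdn Q = linearized_commuting Q"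
proof
  show "tangent_space Vdn Q \<subseteq> linearized_commuting Q"
    unfolding linearized_commuting_def using tangent_space_Vdn_commutator by blast
  show "linearized_commuting Q \<subseteq> tangent_space Vdn Q"
  proof
    fix Z assume "Z \<in> linearized_commuting Q"
    then obtain q where "Z = (\<chi> s. lift (Z $ r0) s + matrix_poly (q s) A)"
      using linearized_commuting_eq_lift by blast
    then show "Z \<in> tangent_space Vdn Q"
      using tangent_curve_Vdn[of "Z $ r0" q] by simp
  qed
qed

lemma tangent_space_Tdn_eq:
  "tangent_space Tdn Q = {Z \<in> linearized_commuting Q. \<forall>r. upper_triangular (Z $ r)}"
proof
  show "tangent_space Tdn Q \<subseteq> {Z \<in> linearized_commuting Q. \<forall>r. upper_triangular (Z $ r)}"
    using tangent_space_mono[of Tdn Vdn] tangent_space_Vdn_eq tangent_space_Tdn_upper_triangular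
    unfolding Tdn_def by blast
  show "{Z \<in> linearized_commuting Q. \<forall>r. upper_triangular (Z $ r)} \<subseteq> tangent_space Tdn Q"
  proof clarify
    fix Z assume "Z \<in> linearized_commuting Q" and "\<forall>r. upper_triangular (Z $ r)"
    moreover obtain q where "Z = (\<chi> s. lift (Z $ r0) s + matrix_poly (q s) A)"
      using linearized_commuting_eq_lift calculation(1) by blast
    ultimately show "Z \<in> tangent_space Tdn Q"
      using tangent_curve_Tdn[of "Z $ r0" q] by simp
  qed
qed

definition tangent_coords where
  "tangent_coords Z = (Z $ r0, \<chi> s. if s = r0 then 0 else diagonal (Z $ s))"

lemma linear_tangent_coords: "linear tangent_coords"
  by (rule linearI) (auto simp: tangent_coords_def diagonal_def vec_eq_iff)

lemma linearized_commuting_tangent_coords_eq_0: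
  assumes "Z \<in> linearized_commuting Q" and "tangent_coords Z = 0"
  shows "Z = 0"
proof -
  have "Z $ s = 0" for s
  proof (cases "s = r0")
    case False
    then have "commutator A (Z $ s) = commutator (Q $ s) (Z $ r0)"
      using assms(1) by (simp add: linearized_commuting_def)
    with assms(2) have "A ** Z $ s = Z $ s ** A"
      by (simp add: tangent_coords_def commutator_def zero_prod_def)
    moreover have "Z $ s $ i $ i = 0" for i
    proof -
      have "snd (tangent_coords Z) $ s $ i = 0"
        using assms(2) by (simp add: zero_prod_def)
      with False show ?thesis
        by (simp add: tangent_coords_def diagonal_def)
    qed
    ultimately show ?thesis
      using commuting_diagonal_eq_0 upper_triangular_Q inj_diagonal_A by blast
  qed (use assms(2) in \<open>simp add: tangent_coords_def zero_prod_def\<close>)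
  then show ?thesis
    by (simp add: vec_eq_iff)
qed

lemma tangent_coords_surj:
  assumes "c $ r0 = 0"
  shows "(W, c) \<in> tangent_coords ` tangent_space Vdn Q"
    and "upper_triangular W \<Longrightarrow> (W, c) \<in> tangent_coords ` tangent_space Tdn Q"
proof -
  have "\<exists>p. \<forall>i. poly p (A $ i $ i) = c $ s $ i - lift W s $ i $ i" for s
    by (rule lagrange_interpolation[OF inj_diagonal_A])
  then obtain q where q: "\<And>s i. poly (q s) (A $ i $ i) = c $ s $ i - lift W s $ i $ i"
    by metis
  define Z where "Z = (\<chi> s. lift W s + matrix_poly ((q(r0 := 0)) s) A)"
  have "tangent_coords Z = (W, c)"
    using assms by (auto simp: Z_def tangent_coords_def diagonal_def lift_r0 vec_eq_iff
        matrix_poly_diagonal[OF upper_triangular_Q] q)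
  note image = image_eqI[where f = tangent_coords, OF this[symmetric]]
  show "(W, c) \<in> tangent_coords ` tangent_space Vdn Q"
    by (rule image) (unfold Z_def, rule tangent_curve_Vdn)
  show "upper_triangular W \<Longrightarrow> (W, c) \<in> tangent_coords ` tangent_space Tdn Q"
    by (rule image) (unfold Z_def, rule tangent_curve_Tdn)
qed

lemma tangent_coords_image_Vdn: "tangent_coords ` tangent_space Vdn Q = UNIV \<times> {c. c $ r0 = 0}"
  using tangent_coords_surj(1) by (auto simp: tangent_coords_def)

lemma tangent_coords_image_Tdn:
  "tangent_coords ` tangent_space Tdn Q = {W. upper_triangular W} \<times> {c. c $ r0 = 0}"
  using tangent_coords_surj(2) tangent_space_Tdn_upper_triangular by (auto simp: tangent_coords_def)

lemma dim_tangent_space_Vdn: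
  "dim (tangent_space Vdn Q) = 2 * CARD('n)^2 + 2 * (CARD('d) - 1) * CARD('n)"
proof -
  have "dim (tangent_space Vdn Q) = dim (tangent_coords ` tangent_space Vdn Q)"
    using linearized_commuting_tangent_coords_eq_0 subspace_linearized_commuting
    by (intro dim_image_eq_if_kernel_trivial[symmetric] linear_tangent_coords)
      (simp_all add: tangent_space_Vdn_eq)
  then show ?thesis
    by (simp add: tangent_coords_image_Vdn dim_Times subspace_vec_nth_eq_0 dim_vec_nth_eq_0
        power2_eq_square)
qed

lemma dim_tangent_space_Tdn:
  "dim (tangent_space Tdn Q) = CARD('n)^2 + (2 * CARD('d) - 1) * CARD('n)"
proof -
  have "dim (tangent_space Tdn Q) = dim (tangent_coords ` tangent_space Tdn Q)"
    using linearized_commuting_tangent_coords_eq_0 subspace_linearized_commuting_upper_triangular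
    by (intro dim_image_eq_if_kernel_trivial[symmetric] linear_tangent_coords)
      (simp_all add: tangent_space_Tdn_eq)
  moreover obtain d where "CARD('d) = Suc d"
    using zero_less_card_finite gr0_implies_Suc by blast
  ultimately show ?thesis
    by (simp add: tangent_coords_image_Tdn dim_Times subspace_upper_triangular subspace_vec_nth_eq_0
        dim_upper_triangular dim_vec_nth_eq_0 algebra_simps)
qed

end

theorem lemma4p2:
  fixes Q :: "(complex^('n::{finite,linorder})^('n::{finite,linorder}))^('d::finite)"
  assumes "Q \<in> Tdn" and "Q \<in> Vdn_gen"
  shows "(tangent_space Vdn Q =
           {Z. \<forall>r s. r \<noteq> s \<longrightarrow> commutator (Q $ r) (Z $ s) = commutator (Q $ s) (Z $ r)}) \<and>
         (tangent_space Tdn Q =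
           {Z. (\<forall>r. upper_triangular (Z $ r)) \<and>
               (\<forall>r s. r \<noteq> s \<longrightarrow> commutator (Q $ r) (Z $ s) = commutator (Q $ s) (Z $ r))}) \<and>
         (dim (tangent_space Vdn Q)
           = 2 * CARD('n)^2 + 2 * (CARD('d) - 1) * CARD('n)) \<and>
         (dim (tangent_space Tdn Q)
           = CARD('n)^2 + (2 * CARD('d) - 1) * CARD('n))"
proof -
  fix r0 :: 'd
  interpret generic_triangular_tuple Q r0
    using assms by unfold_locales
  show ?thesis
    using tangent_space_Vdn_eq tangent_space_Tdn_eq dim_tangent_space_Vdn dim_tangent_space_Tdn
    by (simp add: linearized_commuting_def conj_commute)
qed

end
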